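(* Let $p$ be a positive stochastic choice function for which $\sim_p$ is transitive. If $p$ exhibits the similarity effect, then $p$ satisfies Similar Regularity.
   Context: $X$ is a finite set, $\mathscr{A}$ the nonempty subsets; $p:X\times\mathscr{A}\to[0,1]$ with $\sum_{a\in A}p(a,A)=1$, $p(x,A)=0$ for $x\notin A$, $p(a,A)>0$ for $a\in A$; $A\cup x=A\cup\{x\}$. $a\sim_p b$ means $\frac{p(a,A)}{p(b,A)}=\frac{p(a,\{a,b\})}{p(b,\{a,b\})}$ for every $A\in\mathscr{A}$ containing $a,b$. Similarity effect: for all $A\in\mathscr{A}$, $a,b\in A$, $x\notin A$: if $a\sim_p x$ and $b\not\sim_p x$, then $\frac{p(a,A\cup x)}{p(b,A\cup x)}<\frac{p(a,A)}{p(b,A)}$. Similar Regularity: for any $A\in\mathscr{A}$, $x\in A$ and $y\in X$ with $x\sim_p y$, $p(x,A\cup y)\le p(x,A)$. *)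

theory Defs
  imports Complex_Main
begin

text \<open>A (positive) stochastic choice function on the finite ground set X:
  p x A is the probability of choosing x from the menu A, for nonempty A \<subseteq> X.\<close>

definition menus :: "'a set \<Rightarrow> 'a set set" where
  "menus X = {A. A \<subseteq> X \<and> A \<noteq> {}}"

definition positive_scf :: "'a set \<Rightarrow> ('a \<Rightarrow> 'a set \<Rightarrow> real) \<Rightarrow> bool" where
  "positive_scf X p \<longleftrightarrow> finite X \<and>
     (\<forall>A \<in> menus X. (\<forall>x \<in> X. 0 \<le> p x A \<and> p x A \<le> 1)
        \<and> (\<Sum>a\<in>A. p a A) = 1
        \<and> (\<forall>x \<in> X. x \<notin> A \<longrightarrow> p x A = 0)
        \<and> (\<forall>a \<in> A. p a A > 0))"

definition sim :: "'a set \<Rightarrow> ('a \<Rightarrow> 'a set \<Rightarrow> real) \<Rightarrow> 'a \<Rightarrow> 'a \<Rightarrow> bool" where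
  "sim X p a b \<longleftrightarrow> (\<forall>A \<in> menus X. a \<in> A \<longrightarrow> b \<in> A \<longrightarrow>
      p a A / p b A = p a {a, b} / p b {a, b})"

definition sim_transitive :: "'a set \<Rightarrow> ('a \<Rightarrow> 'a set \<Rightarrow> real) \<Rightarrow> bool" where
  "sim_transitive X p \<longleftrightarrow>
     (\<forall>a \<in> X. \<forall>b \<in> X. \<forall>c \<in> X. sim X p a b \<longrightarrow> sim X p b c \<longrightarrow> sim X p a c)"

definition similarity_effect :: "'a set \<Rightarrow> ('a \<Rightarrow> 'a set \<Rightarrow> real) \<Rightarrow> bool" where
  "similarity_effect X p \<longleftrightarrow>
     (\<forall>A \<in> menus X. \<forall>a \<in> A. \<forall>b \<in> A. \<forall>x \<in> X. x \<notin> A \<longrightarrow>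
        sim X p a x \<longrightarrow> \<not> sim X p b x \<longrightarrow>
        p a (insert x A) / p b (insert x A) < p a A / p b A)"

definition similar_regularity :: "'a set \<Rightarrow> ('a \<Rightarrow> 'a set \<Rightarrow> real) \<Rightarrow> bool" where
  "similar_regularity X p \<longleftrightarrow>
     (\<forall>A \<in> menus X. \<forall>x \<in> A. \<forall>y \<in> X. sim X p x y \<longrightarrow> p x (insert y A) \<le> p x A)"

end

theory Submission
  imports Defs
begin

text \<open>Fix a menu A containing x and an outside alternative y similar to x.
  For every z \<in> A the odds of x against z do not increase when y is added:
  if z is similar to y, then by transitivity z is similar to x and the odds are
  the binary ones in both menus; otherwise the similarity effect makes them drop.
  So every z \<in> A gains probability relative to x, and since both menus carry
  total probability 1, x itself cannot gain.\<close>

lemma positive_scf_finite: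
  "positive_scf X p \<Longrightarrow> finite X"
  unfolding positive_scf_def by blast

lemma positive_scf_pos:
  "positive_scf X p \<Longrightarrow> A \<in> menus X \<Longrightarrow> a \<in> A \<Longrightarrow> 0 < p a A"
  unfolding positive_scf_def by blast

lemma positive_scf_nonneg:
  "positive_scf X p \<Longrightarrow> A \<in> menus X \<Longrightarrow> a \<in> X \<Longrightarrow> 0 \<le> p a A"
  unfolding positive_scf_def by blast

lemma positive_scf_sum_eq_1:
  "positive_scf X p \<Longrightarrow> A \<in> menus X \<Longrightarrow> (\<Sum>a\<in>A. p a A) = 1"
  unfolding positive_scf_def by blast

lemma insert_in_menus:
  "A \<in> menus X \<Longrightarrow> y \<in> X \<Longrightarrow> insert y A \<in> menus X"
  unfolding menus_def by blast

lemma sim_sym: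
  assumes "sim X p a b"
  shows "sim X p b a"
  unfolding sim_def
proof (intro ballI impI)
  fix A assume A: "A \<in> menus X" "b \<in> A" "a \<in> A"
  have "p a A / p b A = p a {a, b} / p b {a, b}"
    using assms A unfolding sim_def by blast
  then have "inverse (p a A / p b A) = inverse (p a {a, b} / p b {a, b})"
    by simp
  then show "p b A / p a A = p b {b, a} / p a {b, a}"
    by (simp add: insert_commute)
qed

lemma sim_odds_eq:
  assumes "sim X p a b" "A \<in> menus X" "B \<in> menus X" "a \<in> A" "b \<in> A" "a \<in> B" "b \<in> B"
  shows "p a A / p b A = p a B / p b B"
proof -
  have "p a A / p b A = p a {a, b} / p b {a, b}" "p a B / p b B = p a {a, b} / p b {a, b}"
    using assms unfolding sim_def by blast+
  then show ?thesis by simp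
qed

lemma odds_insert_similar_le:
  assumes trans: "sim_transitive X p" and effect: "similarity_effect X p"
    and A: "A \<in> menus X" and x: "x \<in> A" and z: "z \<in> A"
    and y: "y \<in> X" "y \<notin> A" and sxy: "sim X p x y"
  shows "p x (insert y A) / p z (insert y A) \<le> p x A / p z A"
proof (cases "sim X p z y")
  case True
  have "x \<in> X" "z \<in> X" using A x z unfolding menus_def by blast+
  with y(1) sxy sim_sym[OF True] trans have "sim X p x z"
    unfolding sim_transitive_def by blast
  then have "p x (insert y A) / p z (insert y A) = p x A / p z A"
    using sim_odds_eq[OF _ insert_in_menus[OF A y(1)] A] x z by blast
  then show ?thesis by simp
next
  case False
  have "\<forall>a\<in>A. \<forall>b\<in>A. sim X p a y \<longrightarrow> \<not> sim X p b y \<longrightarrow>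
      p a (insert y A) / p b (insert y A) < p a A / p b A"
    using effect A y unfolding similarity_effect_def by blast
  with x z sxy False show ?thesis by fastforce
qed

lemma prob_le_if_odds_le:
  fixes P Q :: "'a \<Rightarrow> real"
  assumes "finite B" "A \<subseteq> B" "x \<in> A"
    and "sum P A = 1" "sum Q B = 1"
    and "\<And>z. z \<in> A \<Longrightarrow> 0 < P z" "\<And>z. z \<in> A \<Longrightarrow> 0 < Q z" "\<And>z. z \<in> B \<Longrightarrow> 0 \<le> Q z"
    and odds: "\<And>z. z \<in> A \<Longrightarrow> Q x / Q z \<le> P x / P z"
  shows "Q x \<le> P x"
proof -
  have Px: "0 < P x" and Qx: "0 < Q x" using assms(3,6,7) by auto
  have rel: "P z / P x \<le> Q z / Q x" if "z \<in> A" for z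
  proof -
    have "inverse (P x / P z) \<le> inverse (Q x / Q z)"
      using odds[OF that] assms(6,7)[OF that] Qx by (intro le_imp_inverse_le) auto
    then show ?thesis by simp
  qed
  have "1 / P x = (\<Sum>z\<in>A. P z / P x)"
    by (simp add: assms(4) flip: sum_divide_distrib)
  also have "\<dots> \<le> (\<Sum>z\<in>A. Q z / Q x)"
    using rel by (rule sum_mono)
  also have "\<dots> \<le> (\<Sum>z\<in>B. Q z / Q x)"
    using assms(1,2,8) Qx by (intro sum_mono2) auto
  also have "\<dots> = 1 / Q x"
    by (simp add: assms(5) flip: sum_divide_distrib)
  finally show ?thesis
    using Px Qx by (simp add: field_simps)
qed

theorem proposition7:
  fixes X :: "'a set" and p :: "'a \<Rightarrow> 'a set \<Rightarrow> real"
  assumes "positive_scf X p"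
    and "sim_transitive X p"
    and "similarity_effect X p"
  shows "similar_regularity X p"
  unfolding similar_regularity_def
proof (intro ballI impI)
  fix A x y assume A: "A \<in> menus X" and x: "x \<in> A" and y: "y \<in> X" and sxy: "sim X p x y"
  show "p x (insert y A) \<le> p x A"
  proof (cases "y \<in> A")
    case True
    then show ?thesis by (simp add: insert_absorb)
  next
    case False
    have A': "insert y A \<in> menus X" using insert_in_menus[OF A y] .
    then have AX: "insert y A \<subseteq> X" unfolding menus_def by blast
    show ?thesis
    proof (rule prob_le_if_odds_le[where P = "\<lambda>z. p z A" and Q = "\<lambda>z. p z (insert y A)"])
      show "finite (insert y A)"
        using AX positive_scf_finite[OF assms(1)] by (rule finite_subset)
      show "(\<Sum>z\<in>A. p z A) = 1"
        using positive_scf_sum_eq_1[OF assms(1) A] .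
      show "(\<Sum>z\<in>insert y A. p z (insert y A)) = 1"
        using positive_scf_sum_eq_1[OF assms(1) A'] .
      show "0 < p z A" if "z \<in> A" for z
        using positive_scf_pos[OF assms(1) A that] .
      show "0 < p z (insert y A)" if "z \<in> A" for z
        using positive_scf_pos[OF assms(1) A'] that by blast
      show "0 \<le> p z (insert y A)" if "z \<in> insert y A" for z
        using positive_scf_nonneg[OF assms(1) A'] AX that by blast
      show "p x (insert y A) / p z (insert y A) \<le> p x A / p z A" if "z \<in> A" for z
        using odds_insert_similar_le[OF assms(2,3) A x that y False sxy] .
    qed (use x in blast)+
  qed
qed

end
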